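(* Let $n\ge 1$ and let $\xi=(\xi^1,\ldots,\xi^n)\in\mathbb{Z}^n\setminus\{0\}$. Let $k$ be the number of non-zero coordinates of $\xi$; write $\xi^{i_1},\ldots,\xi^{i_k}\neq 0$ with $i_1<\cdots<i_k$, and $\xi^{j_1}=\cdots=\xi^{j_{n-k}}=0$ with $j_1<\cdots<j_{n-k}$. Fix $\bar s\in\{1,\ldots,k\}$ and define vectors $\xi_1,\ldots,\xi_n\in\mathbb{Z}^n$ as follows: - $\xi_1=\xi$; - for $p=2,\ldots,k-\bar s+1$: $\xi_p^{i_{\bar s-1+p}}=-\xi^{i_{\bar s-1+p}}$ and $\xi_p^i=\xi^i$ for all other indices $i$; - for $p=k-\bar s+2,\ldots,k$: $\xi_p^{i_{\bar s-1+p-k}}=-\xi^{i_{\bar s-1+p-k}}$ and $\xi_p^i=\xi^i$ for all other indices $i$; - for $p=k+1,\ldots,n$: $\xi_p^{i_{\bar s}}=0$, $\xi_p^{j_{p-k}}=\xi^{i_{\bar s}}$, and $\xi_p^i=\xi^i$ for all other indices $i$. Then the vectors $\xi_1,\ldots,\xi_n$ are linearly independent.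
   Context: Here $\xi_p^i$ denotes the $i$-th coordinate of the vector $\xi_p$. *)

theory Defs
  imports Complex_Main
begin

text \<open>Vectors in Z^n are functions nat => int, coordinates indexed by 1..n
  (values outside 1..n are irrelevant).\<close>

definition nz_set :: "nat \<Rightarrow> (nat \<Rightarrow> int) \<Rightarrow> nat set" where
  "nz_set n \<xi> = {i \<in> {1..n}. \<xi> i \<noteq> 0}"

definition z_set :: "nat \<Rightarrow> (nat \<Rightarrow> int) \<Rightarrow> nat set" where
  "z_set n \<xi> = {i \<in> {1..n}. \<xi> i = 0}"

definition nz_idx :: "nat \<Rightarrow> (nat \<Rightarrow> int) \<Rightarrow> nat \<Rightarrow> nat" where
  "nz_idx n \<xi> m = sorted_list_of_set (nz_set n \<xi>) ! (m - 1)"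

definition z_idx :: "nat \<Rightarrow> (nat \<Rightarrow> int) \<Rightarrow> nat \<Rightarrow> nat" where
  "z_idx n \<xi> m = sorted_list_of_set (z_set n \<xi>) ! (m - 1)"

definition xi_vec :: "nat \<Rightarrow> (nat \<Rightarrow> int) \<Rightarrow> nat \<Rightarrow> nat \<Rightarrow> (nat \<Rightarrow> int)" where
  "xi_vec n \<xi> s p =
     (let k = card (nz_set n \<xi>); i = nz_idx n \<xi>; j = z_idx n \<xi> in
      if p = 1 then \<xi>
      else if 2 \<le> p \<and> p \<le> k - s + 1 then \<xi>(i (s - 1 + p) := - \<xi> (i (s - 1 + p)))
      else if k - s + 2 \<le> p \<and> p \<le> k then \<xi>(i (s - 1 + p - k) := - \<xi> (i (s - 1 + p - k)))
      else \<xi>(i s := 0, j (p - k) := \<xi> (i s)))"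

definition lin_indep_family :: "nat \<Rightarrow> nat \<Rightarrow> (nat \<Rightarrow> nat \<Rightarrow> int) \<Rightarrow> bool" where
  "lin_indep_family n m v \<longleftrightarrow>
     (\<forall>c :: nat \<Rightarrow> real.
        (\<forall>i \<in> {1..n}. (\<Sum>p = 1..m. c p * real_of_int (v p i)) = 0) \<longrightarrow>
        (\<forall>p \<in> {1..m}. c p = 0))"

end

theory Submission
  imports Defs
begin

text \<open>Every vector \<open>\<xi>\<^sub>p\<close> with \<open>p > k\<close> is the only one that is non-zero at its zero coordinate
  \<open>j\<^sub>p\<^sub>-\<^sub>k\<close>, so those coefficients vanish. On the remaining vectors
  \<open>\<xi>\<^sub>1, \<dots>, \<xi>\<^sub>k\<close>, all of which agree with \<open>\<xi>\<close> at \<open>i\<^sub>s\<close>, the coordinate \<open>i\<^sub>s\<close> forces the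
  coefficients to sum to zero; each \<open>\<xi>\<^sub>p\<close> with \<open>2 \<le> p \<le> k\<close> flips the sign of a different
  coordinate \<open>i \<noteq> i\<^sub>s\<close>, and at that coordinate the combination equals
  \<open>\<xi>\<^sup>i (\<Sum> c - 2 c\<^sub>p)\<close>, so \<open>c\<^sub>p = 0\<close>. Finally \<open>c\<^sub>1 = \<Sum> c = 0\<close>.\<close>

lemma sorted_list_of_set_nth_mem:
  assumes "finite A" "m < card A"
  shows "sorted_list_of_set A ! m \<in> A"
  using assms nth_mem[of m "sorted_list_of_set A"] by simp

lemma sorted_list_of_set_nth_inj:
  assumes "m < card A" "m' < card A" "sorted_list_of_set A ! m = sorted_list_of_set A ! m'"
  shows "m = m'"
  using assms nth_eq_iff_index_eq[OF distinct_sorted_list_of_set, of m A m'] by simp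

lemma coeff_eq_0_if_unique_nonzero:
  fixes c a :: "'b \<Rightarrow> 'a :: idom"
  assumes "finite A" "q \<in> A" "\<forall>r \<in> A - {q}. a r = 0" "a q \<noteq> 0"
    and "(\<Sum>r\<in>A. c r * a r) = 0"
  shows "c q = 0"
proof -
  have "(\<Sum>r\<in>A. c r * a r) = c q * a q"
    using assms(1-3) by (simp add: sum.remove)
  then show ?thesis using assms(4,5) by simp
qed

lemma coeff_eq_0_if_sign_flip:
  fixes c :: "'b \<Rightarrow> 'a :: {idom, ring_char_0}"
  assumes "finite A" "p \<in> A" "a \<noteq> 0" "(\<Sum>r\<in>A. c r) = 0"
    and "(\<Sum>r\<in>A. c r * (if r = p then - a else a)) = 0"
  shows "c p = 0"
proof -
  have "(\<Sum>r\<in>A. c r * (if r = p then - a else a)) = (\<Sum>r\<in>A. c r * a) - 2 * c p * a"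
    using assms(1,2) by (simp add: sum.remove algebra_simps)
  also have "\<dots> = - 2 * c p * a"
    using assms(4) by (simp add: sum_distrib_right[symmetric])
  finally show ?thesis using assms(3,5) by simp
qed

text \<open>The vectors \<open>\<xi>\<^sub>2, \<dots>, \<xi>\<^sub>k\<close> negate, in this order, the coordinates
  \<open>i\<^sub>s\<^sub>+\<^sub>1, \<dots>, i\<^sub>k, i\<^sub>1, \<dots>, i\<^sub>s\<^sub>-\<^sub>1\<close>.\<close>
definition negated_pos :: "nat \<Rightarrow> nat \<Rightarrow> nat \<Rightarrow> nat" where
  "negated_pos k s p = (if p \<le> k - s + 1 then s - 1 + p else s - 1 + p - k)"

lemma negated_pos_mem:
  assumes "1 \<le> s" "s \<le> k" "p \<in> {2..k}"
  shows "negated_pos k s p \<in> {1..k} - {s}"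
  using assms unfolding negated_pos_def by auto

lemma inj_on_negated_pos:
  assumes "s \<le> k"
  shows "inj_on (negated_pos k s) {2..k}"
  using assms unfolding negated_pos_def by (auto intro!: inj_onI split: if_splits)

lemma finite_nz_set: "finite (nz_set n \<xi>)"
  unfolding nz_set_def by simp

lemma finite_z_set: "finite (z_set n \<xi>)"
  unfolding z_set_def by simp

locale xi_family =
  fixes n :: nat and \<xi> :: "nat \<Rightarrow> int" and s :: nat
  assumes s_pos: "1 \<le> s" and s_le_card: "s \<le> card (nz_set n \<xi>)"
begin

abbreviation "k \<equiv> card (nz_set n \<xi>)"
abbreviation "I \<equiv> nz_idx n \<xi>"
abbreviation "J \<equiv> z_idx n \<xi>"
abbreviation "g \<equiv> negated_pos k s"
abbreviation "v \<equiv> xi_vec n \<xi> s"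

lemma card_nz_set_le: "k \<le> n"
proof -
  have "nz_set n \<xi> \<subseteq> {1..n}" unfolding nz_set_def by auto
  then show ?thesis using card_mono[of "{1..n}"] by fastforce
qed

lemma card_z_set: "card (z_set n \<xi>) = n - k"
proof -
  have "z_set n \<xi> \<union> nz_set n \<xi> = {1..n}" "z_set n \<xi> \<inter> nz_set n \<xi> = {}"
    unfolding z_set_def nz_set_def by auto
  then have "card (z_set n \<xi>) + k = n"
    using card_Un_disjoint[of "z_set n \<xi>" "nz_set n \<xi>"] by (simp add: z_set_def nz_set_def)
  then show ?thesis by simp
qed

lemma nz_idx_mem:
  assumes "m \<in> {1..k}"
  shows "I m \<in> {1..n} \<and> \<xi> (I m) \<noteq> 0"
proof -
  have "m - 1 < card (nz_set n \<xi>)" using assms by auto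
  then have "I m \<in> nz_set n \<xi>"
    unfolding nz_idx_def by (rule sorted_list_of_set_nth_mem[OF finite_nz_set])
  then show ?thesis unfolding nz_set_def by simp
qed

lemma inj_on_nz_idx: "inj_on I {1..k}"
proof (rule inj_onI)
  fix m m' assume "m \<in> {1..k}" "m' \<in> {1..k}" "I m = I m'"
  then have "m - 1 = m' - 1"
    using sorted_list_of_set_nth_inj[of "m - 1" "nz_set n \<xi>" "m' - 1"]
    unfolding nz_idx_def by auto
  then show "m = m'" using \<open>m \<in> {1..k}\<close> \<open>m' \<in> {1..k}\<close> by auto
qed

lemma z_idx_mem:
  assumes "q \<in> {1..n - k}"
  shows "J q \<in> {1..n} \<and> \<xi> (J q) = 0"
proof -
  have "q - 1 < card (z_set n \<xi>)" using assms card_z_set by auto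
  then have "J q \<in> z_set n \<xi>"
    unfolding z_idx_def by (rule sorted_list_of_set_nth_mem[OF finite_z_set])
  then show ?thesis unfolding z_set_def by simp
qed

lemma inj_on_z_idx: "inj_on J {1..n - k}"
proof (rule inj_onI)
  fix q q' assume "q \<in> {1..n - k}" "q' \<in> {1..n - k}" "J q = J q'"
  then have "q - 1 = q' - 1"
    using card_z_set sorted_list_of_set_nth_inj[of "q - 1" "z_set n \<xi>" "q' - 1"]
    unfolding z_idx_def by auto
  then show "q = q'" using \<open>q \<in> {1..n - k}\<close> \<open>q' \<in> {1..n - k}\<close> by auto
qed

lemma xi_vec_1: "v 1 = \<xi>"
  unfolding xi_vec_def by simp

lemma xi_vec_negate: "p \<in> {2..k} \<Longrightarrow> v p = \<xi>(I (g p) := - \<xi> (I (g p)))"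
  unfolding xi_vec_def Let_def negated_pos_def by auto

lemma xi_vec_transfer: "k < p \<Longrightarrow> v p = \<xi>(I s := 0, J (p - k) := \<xi> (I s))"
  using s_pos s_le_card unfolding xi_vec_def Let_def by auto

lemma xi_vec_at_z_idx:
  assumes "q \<in> {1..n - k}" "r \<in> {1..n}"
  shows "v r (J q) = (if r = k + q then \<xi> (I s) else 0)"
proof -
  have Jq: "J q \<in> {1..n}" "\<xi> (J q) = 0" using z_idx_mem[OF assms(1)] by auto
  consider "r = 1" | "r \<in> {2..k}" | "k < r" using assms(2) by fastforce
  then show ?thesis
  proof cases
    case 1
    then show ?thesis using Jq xi_vec_1 s_pos s_le_card assms(1) by simp
  next
    case 2
    then have "I (g r) \<noteq> J q"
      using nz_idx_mem[of "g r"] negated_pos_mem[OF s_pos s_le_card] Jq by fastforce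
    then show ?thesis using 2 Jq xi_vec_negate assms(1) by simp
  next
    case 3
    have "I s \<noteq> J q" using nz_idx_mem[of s] s_pos s_le_card Jq by auto
    moreover have "J (r - k) = J q \<longleftrightarrow> r = k + q"
    proof
      assume "J (r - k) = J q"
      moreover have "r - k \<in> {1..n - k}" using 3 assms(2) by auto
      ultimately have "r - k = q" using inj_onD[OF inj_on_z_idx] assms(1) by blast
      then show "r = k + q" using 3 by auto
    qed simp
    ultimately show ?thesis using 3 Jq xi_vec_transfer by auto
  qed
qed

lemma xi_vec_at_pivot: "r \<in> {1..k} \<Longrightarrow> v r (I s) = \<xi> (I s)"
  using xi_vec_1 xi_vec_negate[of r] negated_pos_mem[OF s_pos s_le_card, of r]
    inj_on_nz_idx s_pos s_le_card
  by (cases "r = 1") (auto dest: inj_onD)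

lemma xi_vec_at_negated:
  assumes "p \<in> {2..k}" "r \<in> {1..k}"
  shows "v r (I (g p)) = (if r = p then - \<xi> (I (g p)) else \<xi> (I (g p)))"
proof (cases "r = 1")
  case True
  then show ?thesis using assms xi_vec_1 by simp
next
  case False
  then have r: "r \<in> {2..k}" using assms(2) by auto
  have gr: "g r \<in> {1..k}" and gp: "g p \<in> {1..k}"
    using negated_pos_mem[OF s_pos s_le_card] assms(1) r by auto
  have "I (g r) = I (g p) \<longleftrightarrow> r = p"
    using inj_onD[OF inj_on_nz_idx _ gr gp] inj_onD[OF inj_on_negated_pos[OF s_le_card] _ r assms(1)]
    by auto
  then show ?thesis using xi_vec_negate[OF r] by auto
qed

lemma high_coeffs_vanish:
  fixes c :: "nat \<Rightarrow> real"
  assumes "\<forall>x \<in> {1..n}. (\<Sum>r = 1..n. c r * real_of_int (v r x)) = 0" "q \<in> {k+1..n}"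
  shows "c q = 0"
proof (rule coeff_eq_0_if_unique_nonzero
    [where A = "{1..n}" and a = "\<lambda>r. real_of_int (v r (J (q - k)))"])
  let ?x = "J (q - k)"
  have q: "q - k \<in> {1..n - k}" using assms(2) by auto
  show "\<forall>r \<in> {1..n} - {q}. real_of_int (v r ?x) = 0"
    using xi_vec_at_z_idx[OF q] assms(2) by auto
  show "real_of_int (v q ?x) \<noteq> 0"
    using xi_vec_at_z_idx[OF q] assms(2) nz_idx_mem[of s] s_pos s_le_card by auto
  show "(\<Sum>r = 1..n. c r * real_of_int (v r ?x)) = 0"
    using assms(1) z_idx_mem[OF q] by blast
qed (use assms(2) in auto)

lemma low_coeffs_vanish:
  fixes c :: "nat \<Rightarrow> real"
  assumes comb: "\<forall>x \<in> {1..n}. (\<Sum>r = 1..k. c r * real_of_int (v r x)) = 0" and "p \<in> {1..k}"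
  shows "c p = 0"
proof -
  have pivot: "I s \<in> {1..n}" "\<xi> (I s) \<noteq> 0" using nz_idx_mem[of s] s_pos s_le_card by auto
  have "(\<Sum>r = 1..k. c r * real_of_int (v r (I s))) = (\<Sum>r = 1..k. c r * real_of_int (\<xi> (I s)))"
    by (rule sum.cong) (simp_all add: xi_vec_at_pivot)
  also have "\<dots> = (\<Sum>r = 1..k. c r) * real_of_int (\<xi> (I s))"
    by (simp add: sum_distrib_right)
  finally have "(\<Sum>r = 1..k. c r) * real_of_int (\<xi> (I s)) = 0"
    using comb pivot(1) by simp
  then have sum_0: "(\<Sum>r = 1..k. c r) = 0" using pivot(2) by simp
  have flipped: "c q = 0" if q: "q \<in> {2..k}" for q
  proof (rule coeff_eq_0_if_sign_flip[OF _ _ _ sum_0, where a = "real_of_int (\<xi> (I (g q)))"])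
    let ?x = "I (g q)"
    have x: "?x \<in> {1..n}" "\<xi> ?x \<noteq> 0"
      using nz_idx_mem negated_pos_mem[OF s_pos s_le_card q] by auto
    show "real_of_int (\<xi> ?x) \<noteq> 0" using x(2) by simp
    show "(\<Sum>r = 1..k. c r * (if r = q then - real_of_int (\<xi> ?x) else real_of_int (\<xi> ?x))) = 0"
    proof -
      have "(\<Sum>r = 1..k. c r * real_of_int (v r ?x))
          = (\<Sum>r = 1..k. c r * (if r = q then - real_of_int (\<xi> ?x) else real_of_int (\<xi> ?x)))"
        by (rule sum.cong) (simp_all add: xi_vec_at_negated[OF q])
      then show ?thesis using comb x(1) by simp
    qed
  qed (use q in auto)
  have "c 1 = (\<Sum>r = 1..k. c r)"
    using s_pos s_le_card flipped by (simp add: sum.atLeast_Suc_atMost numeral_2_eq_2)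
  then show ?thesis using assms(2) sum_0 flipped by (cases "p = 1") auto
qed

end

theorem lemma3p1:
  fixes n :: nat and \<xi> :: "nat \<Rightarrow> int" and s :: nat
  assumes "n \<ge> 1"
    and "\<exists>i \<in> {1..n}. \<xi> i \<noteq> 0"
    and "1 \<le> s" and "s \<le> card (nz_set n \<xi>)"
  shows "lin_indep_family n n (xi_vec n \<xi> s)"
  unfolding lin_indep_family_def
proof (intro allI impI ballI)
  \<comment> \<open>The first two hypotheses are implied by \<open>1 \<le> s \<le> k\<close>.\<close>
  interpret xi_family n \<xi> s using assms(3,4) by unfold_locales
  fix c :: "nat \<Rightarrow> real" and p
  assume comb: "\<forall>x \<in> {1..n}. (\<Sum>r = 1..n. c r * real_of_int (v r x)) = 0" and p: "p \<in> {1..n}"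
  have high: "c q = 0" if "q \<in> {k+1..n}" for q
    using high_coeffs_vanish[OF comb that] .
  have "(\<Sum>r = 1..n. c r * real_of_int (v r x)) = (\<Sum>r = 1..k. c r * real_of_int (v r x))" for x
    using sum.ub_add_nat[of 1 k "\<lambda>r. c r * real_of_int (v r x)" "n - k"] card_nz_set_le s_pos
      s_le_card high
    by simp
  then have "c p = 0" if "p \<in> {1..k}" for p
    using low_coeffs_vanish[OF _ that] comb by simp
  then show "c p = 0" using high p by fastforce
qed

end
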